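(* In any commitment scheme with non-colluding bidders as described in the context, for every $\ell\in\mathcal{L}$, $(A_\ell,S_\ell)-(M_\ell,X_\ell^n)-(Y^n,S'_\ell)$ forms a Markov chain.
   Context: Setting: $L$ bidders $\mathcal{L}=\{1,\dots,L\}$ and one verifier connected by a discrete memoryless multiple-access channel $p_{Y|X_{\mathcal{L}}}$ with finite alphabets, plus a noiseless channel. Bidder $\ell$ has a random message $A_\ell$ and private local randomness $S_\ell$; the verifier has local randomness $S'_\ell$ for each $\ell$; all messages and local randomness variables are mutually independent. For $i=1,\dots,n$, bidder $\ell$ sends channel input $X_{\ell,i}$ as a function of $(A_\ell,S_\ell)$ and the verifier messages to it received so far; then $r_i$ rounds of noiseless communication follow: in round $j$ bidder $\ell$ sends $M_{\ell,i,j}$ as a function of $(A_\ell,S_\ell)$ and the previous verifier messages $M'_{\ell,1:i,1:j-1}$, and the verifier replies $M'_{\ell,i,j}$ as a function of $(S'_\ell, M_{\ell,1:i,1:j}, Y^i)$ where $Y^i=(Y_1,\dots,Y_i)$ are the channel outputs so far. $M_\ell$ denotes the entire noiseless exchange (both directions) between bidder $\ell$ and the verifier, and $X_\ell^n=(X_{\ell,1},\dots,X_{\ell,n})$. *)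

theory Defs
  imports "HOL-Probability.Probability"
begin

definition markov_chain :: "('a \<times> 'b \<times> 'c) pmf \<Rightarrow> bool" where
  "markov_chain p \<longleftrightarrow>
     (\<forall>x y z. pmf p (x, y, z) * pmf (map_pmf (\<lambda>(x, y, z). y) p) y
              = pmf (map_pmf (\<lambda>(x, y, z). (x, y)) p) (x, y) * pmf (map_pmf (\<lambda>(x, y, z). (y, z)) p) (y, z))"

text \<open>Noiseless exchange in block i between bidder l and the verifier, k rounds.
  State: (flattened list of bidder messages so far, flattened list of verifier messages so far).
  bid l i j a s hv : bidder message M_{l,i,j} from (A_l,S_l) and previous verifier messages.
  ver l i j t hb ys : verifier reply M'_{l,i,j} from S'_l, bidder messages M_{l,1:i,1:j}, Y^i.\<close>
fun exch_rounds ::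
  "('l \<Rightarrow> nat \<Rightarrow> nat \<Rightarrow> 'a \<Rightarrow> 's \<Rightarrow> 'mv list \<Rightarrow> 'mb)
   \<Rightarrow> ('l \<Rightarrow> nat \<Rightarrow> nat \<Rightarrow> 't \<Rightarrow> 'mb list \<Rightarrow> 'y list \<Rightarrow> 'mv)
   \<Rightarrow> 'l \<Rightarrow> nat \<Rightarrow> 'a \<Rightarrow> 's \<Rightarrow> 't \<Rightarrow> 'y list \<Rightarrow> nat
   \<Rightarrow> 'mb list \<times> 'mv list \<Rightarrow> 'mb list \<times> 'mv list" where
  "exch_rounds bid ver l i a s t ys 0 h = h"
| "exch_rounds bid ver l i a s t ys (Suc k) h =
     (case exch_rounds bid ver l i a s t ys k h of (hb, hv) \<Rightarrow>
        (let hb' = hb @ [bid l i (Suc k) a s hv]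
         in (hb', hv @ [ver l i (Suc k) t hb' ys])))"

text \<open>Transcript of bidder l after i channel uses: (X_l^i, bidder messages, verifier messages).
  enc l i a s hv : channel input X_{l,i} from (A_l,S_l) and the verifier messages received so far.
  r i : number of noiseless rounds after channel use i. ys: channel outputs (at least i of them).\<close>
fun bidder_trace ::
  "('l \<Rightarrow> nat \<Rightarrow> 'a \<Rightarrow> 's \<Rightarrow> 'mv list \<Rightarrow> 'x)
   \<Rightarrow> ('l \<Rightarrow> nat \<Rightarrow> nat \<Rightarrow> 'a \<Rightarrow> 's \<Rightarrow> 'mv list \<Rightarrow> 'mb)
   \<Rightarrow> ('l \<Rightarrow> nat \<Rightarrow> nat \<Rightarrow> 't \<Rightarrow> 'mb list \<Rightarrow> 'y list \<Rightarrow> 'mv)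
   \<Rightarrow> (nat \<Rightarrow> nat) \<Rightarrow> 'l \<Rightarrow> 'a \<Rightarrow> 's \<Rightarrow> 't \<Rightarrow> 'y list \<Rightarrow> nat
   \<Rightarrow> 'x list \<times> 'mb list \<times> 'mv list" where
  "bidder_trace enc bid ver r l a s t ys 0 = ([], [], [])"
| "bidder_trace enc bid ver r l a s t ys (Suc i) =
     (case bidder_trace enc bid ver r l a s t ys i of (xs, hb, hv) \<Rightarrow>
        (case exch_rounds bid ver l (Suc i) a s t (take (Suc i) ys) (r (Suc i)) (hb, hv) of
           (hb', hv') \<Rightarrow> (xs @ [enc l (Suc i) a s hv], hb', hv')))"

primrec channel_outputs ::
  "(('l \<Rightarrow> 'x) \<Rightarrow> 'y pmf)
   \<Rightarrow> ('l \<Rightarrow> nat \<Rightarrow> 'a \<Rightarrow> 's \<Rightarrow> 'mv list \<Rightarrow> 'x)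
   \<Rightarrow> ('l \<Rightarrow> nat \<Rightarrow> nat \<Rightarrow> 'a \<Rightarrow> 's \<Rightarrow> 'mv list \<Rightarrow> 'mb)
   \<Rightarrow> ('l \<Rightarrow> nat \<Rightarrow> nat \<Rightarrow> 't \<Rightarrow> 'mb list \<Rightarrow> 'y list \<Rightarrow> 'mv)
   \<Rightarrow> (nat \<Rightarrow> nat) \<Rightarrow> ('l \<Rightarrow> 'a) \<Rightarrow> ('l \<Rightarrow> 's) \<Rightarrow> ('l \<Rightarrow> 't) \<Rightarrow> nat \<Rightarrow> 'y list pmf" where
  "channel_outputs W enc bid ver r a s t 0 = return_pmf []"
| "channel_outputs W enc bid ver r a s t (Suc i) =
     bind_pmf (channel_outputs W enc bid ver r a s t i) (\<lambda>ys.
       map_pmf (\<lambda>y. ys @ [y])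
         (W (\<lambda>l. enc l (Suc i) (a l) (s l)
                    (snd (snd (bidder_trace enc bid ver r l (a l) (s l) (t l) ys i))))))"

text \<open>Joint distribution of (A_L, S_L, S'_L, Y^n); messages and local randomness are mutually independent.\<close>
definition protocol_dist ::
  "(('l::finite \<Rightarrow> 'x) \<Rightarrow> 'y pmf) \<Rightarrow> ('l \<Rightarrow> 'a pmf) \<Rightarrow> ('l \<Rightarrow> 's pmf) \<Rightarrow> ('l \<Rightarrow> 't pmf)
   \<Rightarrow> ('l \<Rightarrow> nat \<Rightarrow> 'a \<Rightarrow> 's \<Rightarrow> 'mv list \<Rightarrow> 'x)
   \<Rightarrow> ('l \<Rightarrow> nat \<Rightarrow> nat \<Rightarrow> 'a \<Rightarrow> 's \<Rightarrow> 'mv list \<Rightarrow> 'mb)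
   \<Rightarrow> ('l \<Rightarrow> nat \<Rightarrow> nat \<Rightarrow> 't \<Rightarrow> 'mb list \<Rightarrow> 'y list \<Rightarrow> 'mv)
   \<Rightarrow> (nat \<Rightarrow> nat) \<Rightarrow> nat \<Rightarrow> (('l \<Rightarrow> 'a) \<times> ('l \<Rightarrow> 's) \<times> ('l \<Rightarrow> 't) \<times> 'y list) pmf" where
  "protocol_dist W PA PS PT enc bid ver r n =
     bind_pmf (Pi_pmf UNIV undefined PA) (\<lambda>a.
     bind_pmf (Pi_pmf UNIV undefined PS) (\<lambda>s.
     bind_pmf (Pi_pmf UNIV undefined PT) (\<lambda>t.
     map_pmf (\<lambda>ys. (a, s, t, ys)) (channel_outputs W enc bid ver r a s t n))))"

end

theory Submission
  imports Defs
begin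

(* Fix a value v of bidder l's transcript (X_l^n, M_l). The event that the transcript equals v is a
   rectangle: a condition on (A_l, S_l) times a condition on (S'_l, Y^n), because bidder and verifier
   compute their messages alternately, each from its own data and what it has received. On this event
   bidder l's channel inputs are the inputs recorded in v, so Y^n has the same law as in the protocol
   where bidder l merely replays them, and that protocol does not look at (A_l, S_l) at all. As
   (A_l, S_l) is independent of the remaining randomness, E[g1(A_l, S_l) 1{transcript = v} g3(Y^n, S'_l)]
   factors as alpha(g1) * gamma(g3), i.e. the two ends are conditionally independent given v. *)

lemma ennreal_pmf_map_single: "ennreal (pmf (map_pmf f p) v) = (\<integral>\<^sup>+w. indicator {v} (f w) \<partial>p)"
  by (simp add: ennreal_pmf_map indicator_def vimage_def)

lemma markov_chain_if_factorizes:
  fixes p :: "('u \<times> 'v \<times> 'z) pmf"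
  assumes "\<And>y. \<exists>\<alpha> \<gamma>. \<forall>g1 g3.
             (\<integral>\<^sup>+w. g1 (fst w) * indicator {y} (fst (snd w)) * g3 (snd (snd w)) \<partial>p) = \<alpha> g1 * \<gamma> g3"
  shows "markov_chain p"
  unfolding markov_chain_def
proof (intro allI)
  fix x y z
  obtain \<alpha> \<gamma> where fac:
    "\<And>g1 g3. (\<integral>\<^sup>+w. g1 (fst w) * indicator {y} (fst (snd w)) * g3 (snd (snd w)) \<partial>p) = \<alpha> g1 * \<gamma> g3"
    using assms by blast
  let ?one = "\<lambda>_. 1 :: ennreal"
  have "ennreal (pmf p (x, y, z)) = \<alpha> (indicator {x}) * \<gamma> (indicator {z})"
    unfolding fac[symmetric] ennreal_pmf_map_single[of "\<lambda>w. w", unfolded map_pmf_ident]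
    by (intro nn_integral_cong) (auto split: split_indicator)
  moreover have "ennreal (pmf (map_pmf (\<lambda>(x, y, z). y) p) y) = \<alpha> ?one * \<gamma> ?one"
    unfolding fac[symmetric] ennreal_pmf_map_single
    by (intro nn_integral_cong) (auto split: split_indicator)
  moreover have "ennreal (pmf (map_pmf (\<lambda>(x, y, z). (x, y)) p) (x, y)) = \<alpha> (indicator {x}) * \<gamma> ?one"
    unfolding fac[symmetric] ennreal_pmf_map_single
    by (intro nn_integral_cong) (auto split: split_indicator)
  moreover have "ennreal (pmf (map_pmf (\<lambda>(x, y, z). (y, z)) p) (y, z)) = \<alpha> ?one * \<gamma> (indicator {z})"
    unfolding fac[symmetric] ennreal_pmf_map_single
    by (intro nn_integral_cong) (auto split: split_indicator)
  ultimately have "ennreal (pmf p (x, y, z) * pmf (map_pmf (\<lambda>(x, y, z). y) p) y)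
      = ennreal (pmf (map_pmf (\<lambda>(x, y, z). (x, y)) p) (x, y) * pmf (map_pmf (\<lambda>(x, y, z). (y, z)) p) (y, z))"
    by (simp add: ennreal_mult ac_simps)
  then show "pmf p (x, y, z) * pmf (map_pmf (\<lambda>(x, y, z). y) p) y =
       pmf (map_pmf (\<lambda>(x, y, z). (x, y)) p) (x, y) * pmf (map_pmf (\<lambda>(x, y, z). (y, z)) p) (y, z)"
    by (simp add: ennreal_inj)
qed

lemma nn_integral_Pi_pmf_factor:
  fixes P :: "'i::finite \<Rightarrow> 'b pmf" and g :: "'b \<Rightarrow> ennreal"
  assumes "\<And>f c. \<phi> (f(i := c)) = \<phi> f"
  shows "(\<integral>\<^sup>+f. g (f i) * \<phi> f \<partial>Pi_pmf UNIV d P) = (\<integral>\<^sup>+x. g x \<partial>P i) * (\<integral>\<^sup>+f. \<phi> f \<partial>Pi_pmf UNIV d P)"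
proof -
  have Pi: "Pi_pmf UNIV d P = map_pmf (\<lambda>(y, f). f(i := y)) (pair_pmf (P i) (Pi_pmf (UNIV - {i}) d P))"
    using Pi_pmf_insert[of "UNIV - {i}" i d P] by (simp add: insert_absorb)
  have "(\<integral>\<^sup>+f. g (f i) * \<phi> f \<partial>Pi_pmf UNIV d P) = (\<integral>\<^sup>+y. g y * (\<integral>\<^sup>+f. \<phi> f \<partial>Pi_pmf (UNIV - {i}) d P) \<partial>P i)"
    by (simp add: Pi nn_integral_pair_pmf' assms nn_integral_cmult)
  also have "\<dots> = (\<integral>\<^sup>+x. g x \<partial>P i) * (\<integral>\<^sup>+f. \<phi> f \<partial>Pi_pmf (UNIV - {i}) d P)"
    by (simp add: nn_integral_multc)
  also have "(\<integral>\<^sup>+f. \<phi> f \<partial>Pi_pmf (UNIV - {i}) d P) = (\<integral>\<^sup>+f. \<phi> f \<partial>Pi_pmf UNIV d P)"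
    by (simp add: Pi nn_integral_pair_pmf' assms measure_pmf.emeasure_space_1)
  finally show ?thesis .
qed

lemma nn_integral_Pi_pmf_factor2:
  fixes PA :: "'i::finite \<Rightarrow> 'a pmf" and PS :: "'i \<Rightarrow> 's pmf" and h :: "'a \<Rightarrow> 's \<Rightarrow> ennreal"
  assumes "\<And>a s x x'. \<phi> (a(i := x)) (s(i := x')) = \<phi> a s"
  shows "(\<integral>\<^sup>+a. \<integral>\<^sup>+s. h (a i) (s i) * \<phi> a s \<partial>Pi_pmf UNIV d PS \<partial>Pi_pmf UNIV d' PA)
       = (\<integral>\<^sup>+x. \<integral>\<^sup>+x'. h x x' \<partial>PS i \<partial>PA i)
         * (\<integral>\<^sup>+a. \<integral>\<^sup>+s. \<phi> a s \<partial>Pi_pmf UNIV d PS \<partial>Pi_pmf UNIV d' PA)"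
proof -
  have upd_a: "\<phi> (a(i := x)) s = \<phi> a s" and upd_s: "\<phi> a (s(i := x')) = \<phi> a s" for a s x x'
    using assms[of a x s "s i"] assms[of a "a i" s x'] by simp_all
  have "(\<integral>\<^sup>+a. \<integral>\<^sup>+s. h (a i) (s i) * \<phi> a s \<partial>Pi_pmf UNIV d PS \<partial>Pi_pmf UNIV d' PA)
      = (\<integral>\<^sup>+a. (\<integral>\<^sup>+x'. h (a i) x' \<partial>PS i) * (\<integral>\<^sup>+s. \<phi> a s \<partial>Pi_pmf UNIV d PS) \<partial>Pi_pmf UNIV d' PA)"
    by (intro nn_integral_cong nn_integral_Pi_pmf_factor[where g = "h _"]) (rule upd_s)
  also have "\<dots> = (\<integral>\<^sup>+x. \<integral>\<^sup>+x'. h x x' \<partial>PS i \<partial>PA i)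
      * (\<integral>\<^sup>+a. \<integral>\<^sup>+s. \<phi> a s \<partial>Pi_pmf UNIV d PS \<partial>Pi_pmf UNIV d' PA)"
    by (rule nn_integral_Pi_pmf_factor[where g = "\<lambda>x. \<integral>\<^sup>+x'. h x x' \<partial>PS i"]) (simp add: upd_a)
  finally show ?thesis .
qed

lemma pmf_bind_snoc_Nil: "pmf (bind_pmf M (\<lambda>ys. map_pmf (\<lambda>y. ys @ [y]) (K ys))) [] = 0"
  by (auto simp: pmf_eq_0_set_pmf)

lemma pmf_bind_snoc:
  "pmf (bind_pmf M (\<lambda>ys. map_pmf (\<lambda>y. ys @ [y]) (K ys))) (zs @ [z]) = pmf M zs * pmf (K zs) z"
proof -
  have "pmf (map_pmf (\<lambda>y. zs @ [y]) (K zs)) (zs @ [z]) = pmf (K zs) z"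
    by (rule pmf_map_inj') (auto intro: injI)
  then have "ennreal (pmf (map_pmf (\<lambda>y. ys @ [y]) (K ys)) (zs @ [z]))
      = ennreal (pmf (K zs) z) * indicator {zs} ys" for ys
    by (cases "ys = zs") (auto simp: pmf_eq_0_set_pmf)
  then have "ennreal (pmf (bind_pmf M (\<lambda>ys. map_pmf (\<lambda>y. ys @ [y]) (K ys))) (zs @ [z]))
      = (\<integral>\<^sup>+ys. ennreal (pmf (K zs) z) * indicator {zs} ys \<partial>M)"
    by (simp add: ennreal_pmf_bind)
  also have "\<dots> = ennreal (pmf (K zs) z * pmf M zs)"
    by (simp add: nn_integral_cmult_indicator emeasure_pmf_single ennreal_mult)
  finally show ?thesis
    by (simp add: mult.commute)
qed

lemma exch_rounds_appends:
  "\<exists>xb xv. exch_rounds bid ver l i a s t ys k (hb, hv) = (hb @ xb, hv @ xv) \<and> length xb = k \<and> length xv = k"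
proof (induction k)
  case 0
  then show ?case by simp
next
  case (Suc k)
  then obtain xb xv where "exch_rounds bid ver l i a s t ys k (hb, hv) = (hb @ xb, hv @ xv)"
    and "length xb = k" "length xv = k" by blast
  then show ?case by (auto simp: Let_def intro!: exI[of _ "xb @ _"] exI[of _ "xv @ _"])
qed

lemma exch_rounds_rectangle:
  assumes "exch_rounds bid ver l i a1 s1 t1 ys1 k h = h'"
    and "exch_rounds bid ver l i a2 s2 t2 ys2 k h = h'"
  shows "exch_rounds bid ver l i a1 s1 t2 ys2 k h = h'"
  using assms
proof (induction k arbitrary: h')
  case 0
  then show ?case by simp
next
  case (Suc k)
  obtain hb1 hv1 where e1: "exch_rounds bid ver l i a1 s1 t1 ys1 k h = (hb1, hv1)" by fastforce
  obtain hb2 hv2 where e2: "exch_rounds bid ver l i a2 s2 t2 ys2 k h = (hb2, hv2)" by fastforce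
  from Suc.prems e1 e2 have "hb1 = hb2" "hv1 = hv2" "bid l i (Suc k) a1 s1 hv1 = bid l i (Suc k) a2 s2 hv2"
    by (auto simp: Let_def)
  moreover from this have "exch_rounds bid ver l i a1 s1 t2 ys2 k h = (hb1, hv1)"
    using Suc.IH[of "(hb1, hv1)"] e1 e2 by simp
  ultimately show ?case using Suc.prems e1 e2 by (auto simp: Let_def)
qed

lemma bidder_trace_rectangle:
  assumes "bidder_trace enc bid ver r l a1 s1 t1 ys1 n = v"
    and "bidder_trace enc bid ver r l a2 s2 t2 ys2 n = v"
  shows "bidder_trace enc bid ver r l a1 s1 t2 ys2 n = v"
  using assms
proof (induction n arbitrary: v)
  case 0
  then show ?case by simp
next
  case (Suc n)
  let ?exch = "\<lambda>a s t ys. exch_rounds bid ver l (Suc n) a s t (take (Suc n) ys) (r (Suc n))"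
  obtain xs1 hb1 hv1 where e1: "bidder_trace enc bid ver r l a1 s1 t1 ys1 n = (xs1, hb1, hv1)"
    by (metis prod.exhaust)
  obtain xs2 hb2 hv2 where e2: "bidder_trace enc bid ver r l a2 s2 t2 ys2 n = (xs2, hb2, hv2)"
    by (metis prod.exhaust)
  obtain xb1 xv1 where x1: "?exch a1 s1 t1 ys1 (hb1, hv1) = (hb1 @ xb1, hv1 @ xv1)"
    "length xb1 = r (Suc n)" "length xv1 = r (Suc n)"
    using exch_rounds_appends[of bid ver l "Suc n" a1 s1 t1 "take (Suc n) ys1" "r (Suc n)" hb1 hv1] by blast
  obtain xb2 xv2 where x2: "?exch a2 s2 t2 ys2 (hb2, hv2) = (hb2 @ xb2, hv2 @ xv2)"
    "length xb2 = r (Suc n)" "length xv2 = r (Suc n)"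
    using exch_rounds_appends[of bid ver l "Suc n" a2 s2 t2 "take (Suc n) ys2" "r (Suc n)" hb2 hv2] by blast
  from Suc.prems e1 e2 x1 x2 have eqs: "xs1 = xs2" "hb1 @ xb1 = hb2 @ xb2" "hv1 @ xv1 = hv2 @ xv2"
    "enc l (Suc n) a1 s1 hv1 = enc l (Suc n) a2 s2 hv2" by auto
  then have hb: "hb1 = hb2" and hv: "hv1 = hv2"
    using x1(2,3) x2(2,3) by (auto simp: append_eq_append_conv)
  have "bidder_trace enc bid ver r l a1 s1 t2 ys2 n = (xs1, hb1, hv1)"
    using Suc.IH[of "(xs1, hb1, hv1)"] e1 e2 eqs hb hv by simp
  moreover have "?exch a1 s1 t2 ys2 (hb1, hv1) = (hb2 @ xb2, hv2 @ xv2)"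
    by (rule exch_rounds_rectangle[where ?t1.0 = t1 and ?ys1.0 = "take (Suc n) ys1"
          and ?a2.0 = a2 and ?s2.0 = s2])
      (use x1 x2 eqs hb hv in auto)
  ultimately show ?case using Suc.prems e2 x2 eqs by auto
qed

lemma length_bidder_trace_inputs: "length (fst (bidder_trace enc bid ver r l a s t ys n)) = n"
  by (induction n) (auto split: prod.splits)

lemma bidder_trace_inputs_nth:
  "j < n \<Longrightarrow> fst (bidder_trace enc bid ver r l a s t ys n) ! j
     = enc l (Suc j) a s (snd (snd (bidder_trace enc bid ver r l a s t ys j)))"
proof (induction n)
  case 0
  then show ?case by simp
next
  case (Suc n)
  then show ?case
    using length_bidder_trace_inputs[of enc bid ver r l a s t ys n]
    by (cases "j = n") (auto split: prod.splits simp: nth_append)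
qed

lemma bidder_trace_take:
  "bidder_trace enc bid ver r l a s t (take j ys) j = bidder_trace enc bid ver r l a s t ys j"
proof (induction j arbitrary: ys)
  case 0
  then show ?case by simp
next
  case (Suc j)
  have "bidder_trace enc bid ver r l a s t (take (Suc j) ys) j = bidder_trace enc bid ver r l a s t ys j"
    using Suc.IH[of "take (Suc j) ys"] Suc.IH[of ys] by (simp add: min_def)
  then show ?case by (simp split: prod.splits)
qed

lemma bidder_trace_messages_indep_enc:
  "snd (bidder_trace enc bid ver r l a s t ys n) = snd (bidder_trace enc' bid ver r l a s t ys n)"
  by (induction n) (auto split: prod.splits)

definition channel_inputs ::
  "('l \<Rightarrow> nat \<Rightarrow> 'a \<Rightarrow> 's \<Rightarrow> 'mv list \<Rightarrow> 'x)
   \<Rightarrow> ('l \<Rightarrow> nat \<Rightarrow> nat \<Rightarrow> 'a \<Rightarrow> 's \<Rightarrow> 'mv list \<Rightarrow> 'mb)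
   \<Rightarrow> ('l \<Rightarrow> nat \<Rightarrow> nat \<Rightarrow> 't \<Rightarrow> 'mb list \<Rightarrow> 'y list \<Rightarrow> 'mv)
   \<Rightarrow> (nat \<Rightarrow> nat) \<Rightarrow> ('l \<Rightarrow> 'a) \<Rightarrow> ('l \<Rightarrow> 's) \<Rightarrow> ('l \<Rightarrow> 't) \<Rightarrow> 'y list \<Rightarrow> nat \<Rightarrow> 'l \<Rightarrow> 'x" where
  "channel_inputs enc bid ver r a s t ys i =
     (\<lambda>k. enc k (Suc i) (a k) (s k) (snd (snd (bidder_trace enc bid ver r k (a k) (s k) (t k) ys i))))"

lemma channel_outputs_Suc:
  "channel_outputs W enc bid ver r a s t (Suc i) =
     bind_pmf (channel_outputs W enc bid ver r a s t i)
       (\<lambda>ys. map_pmf (\<lambda>y. ys @ [y]) (W (channel_inputs enc bid ver r a s t ys i)))"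
  by (simp add: channel_inputs_def)

declare channel_outputs.simps(2) [simp del]

lemma length_channel_outputs:
  "ys \<in> set_pmf (channel_outputs W enc bid ver r a s t n) \<Longrightarrow> length ys = n"
  by (induction n arbitrary: ys) (auto simp: channel_outputs_Suc)

lemma pmf_channel_outputs_cong:
  assumes "\<And>j. j < n \<Longrightarrow> channel_inputs enc bid ver r a s t (take j ys) j
                          = channel_inputs enc' bid ver r a s t (take j ys) j"
  shows "pmf (channel_outputs W enc bid ver r a s t n) ys
       = pmf (channel_outputs W enc' bid ver r a s t n) ys"
  using assms
proof (induction n arbitrary: ys)
  case 0
  then show ?case by simp
next
  case (Suc n)
  show ?case
  proof (cases ys rule: rev_cases)
    case Nil
    then show ?thesis by (simp add: channel_outputs_Suc pmf_bind_snoc_Nil)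
  next
    case (snoc zs z)
    show ?thesis
    proof (cases "length zs = n")
      case True
      then have "pmf (channel_outputs W enc bid ver r a s t n) zs
          = pmf (channel_outputs W enc' bid ver r a s t n) zs"
        using Suc.prems snoc by (intro Suc.IH) auto
      moreover have "channel_inputs enc bid ver r a s t zs n = channel_inputs enc' bid ver r a s t zs n"
        using Suc.prems[of n] snoc True by simp
      ultimately show ?thesis by (simp add: snoc channel_outputs_Suc pmf_bind_snoc)
    next
      case False
      then have "pmf (channel_outputs W e bid ver r a s t n) zs = 0" for e
        by (auto simp: pmf_eq_0_set_pmf dest: length_channel_outputs)
      then show ?thesis by (simp add: snoc channel_outputs_Suc pmf_bind_snoc)
    qed
  qed
qed

(* Channel uses are numbered from 1, so use j replays xs ! (j - 1). *)
definition replay_inputs :: "'l \<Rightarrow> 'x list \<Rightarrow> ('l \<Rightarrow> nat \<Rightarrow> 'a \<Rightarrow> 's \<Rightarrow> 'mv list \<Rightarrow> 'x)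
   \<Rightarrow> 'l \<Rightarrow> nat \<Rightarrow> 'a \<Rightarrow> 's \<Rightarrow> 'mv list \<Rightarrow> 'x" where
  "replay_inputs l xs enc = (\<lambda>k j a s hv. if k = l then xs ! (j - 1) else enc k j a s hv)"

lemma pmf_channel_outputs_replay:
  assumes "bidder_trace enc bid ver r l (a l) (s l) (t l) ys n = (xs, hb, hv)"
  shows "pmf (channel_outputs W enc bid ver r a s t n) ys
       = pmf (channel_outputs W (replay_inputs l xs enc) bid ver r a s t n) ys"
proof (rule pmf_channel_outputs_cong, rule ext)
  fix j k assume "j < n"
  show "channel_inputs enc bid ver r a s t (take j ys) j k
      = channel_inputs (replay_inputs l xs enc) bid ver r a s t (take j ys) j k"
  proof (cases "k = l")
    case True
    then show ?thesis
      using bidder_trace_inputs_nth[OF \<open>j < n\<close>, of enc bid ver r l "a l" "s l" "t l" ys] assms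
      by (simp add: channel_inputs_def replay_inputs_def bidder_trace_take)
  next
    case False
    then show ?thesis
      using bidder_trace_messages_indep_enc[of enc bid ver r k _ _ _ "take j ys" j "replay_inputs l xs enc"]
      by (simp add: channel_inputs_def replay_inputs_def)
  qed
qed

lemma channel_outputs_replay_upd:
  "channel_outputs W (replay_inputs l xs enc) bid ver r (a(l := x)) (s(l := x')) t n
     = channel_outputs W (replay_inputs l xs enc) bid ver r a s t n"
proof (induction n)
  case 0
  then show ?case by simp
next
  case (Suc n)
  have "channel_inputs (replay_inputs l xs enc) bid ver r (a(l := x)) (s(l := x')) t ys n
      = channel_inputs (replay_inputs l xs enc) bid ver r a s t ys n" for ys
    by (simp add: channel_inputs_def replay_inputs_def fun_eq_iff)
  then show ?case by (simp only: channel_outputs_Suc Suc.IH)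
qed

lemma nn_integral_channel_outputs_transcript:
  fixes g :: "'y list \<Rightarrow> ennreal"
  shows "(\<integral>\<^sup>+ys. indicator {(xs, hb, hv)} (bidder_trace enc bid ver r l (a l) (s l) (t l) ys n) * g ys
            \<partial>channel_outputs W enc bid ver r a s t n)
       = of_bool (\<exists>t' ys'. bidder_trace enc bid ver r l (a l) (s l) t' ys' n = (xs, hb, hv))
         * (\<integral>\<^sup>+ys. of_bool (\<exists>x x'. bidder_trace enc bid ver r l x x' (t l) ys n = (xs, hb, hv)) * g ys
              \<partial>channel_outputs W (replay_inputs l xs enc) bid ver r a s t n)"
proof -
  let ?T = "\<lambda>x x' t ys. bidder_trace enc bid ver r l x x' t ys n"
  have rect: "indicator {(xs, hb, hv)} (?T x x' t ys)
      = (of_bool (\<exists>t' ys'. ?T x x' t' ys' = (xs, hb, hv))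
         * of_bool (\<exists>x x'. ?T x x' t ys = (xs, hb, hv)) :: ennreal)"
    for x x' t ys
    by (cases "?T x x' t ys = (xs, hb, hv)") (auto dest: bidder_trace_rectangle)
  have "(\<integral>\<^sup>+ys. indicator {(xs, hb, hv)} (?T (a l) (s l) (t l) ys) * g ys
           \<partial>channel_outputs W enc bid ver r a s t n)
      = (\<integral>\<^sup>+ys. indicator {(xs, hb, hv)} (?T (a l) (s l) (t l) ys) * g ys
           \<partial>channel_outputs W (replay_inputs l xs enc) bid ver r a s t n)"
    unfolding nn_integral_measure_pmf
    by (intro nn_integral_cong) (auto simp: pmf_channel_outputs_replay split: split_indicator)
  also have "\<dots> = (\<integral>\<^sup>+ys. of_bool (\<exists>t' ys'. ?T (a l) (s l) t' ys' = (xs, hb, hv))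
                         * (of_bool (\<exists>x x'. ?T x x' (t l) ys = (xs, hb, hv)) * g ys)
           \<partial>channel_outputs W (replay_inputs l xs enc) bid ver r a s t n)"
    by (simp add: rect mult.assoc)
  also have "\<dots> = of_bool (\<exists>t' ys'. ?T (a l) (s l) t' ys' = (xs, hb, hv))
         * (\<integral>\<^sup>+ys. of_bool (\<exists>x x'. ?T x x' (t l) ys = (xs, hb, hv)) * g ys
              \<partial>channel_outputs W (replay_inputs l xs enc) bid ver r a s t n)"
    by (rule nn_integral_cmult) simp
  finally show ?thesis .
qed

lemma bidder_view_factorizes:
  fixes W :: "('l::finite \<Rightarrow> 'x) \<Rightarrow> 'y pmf"
    and enc :: "'l \<Rightarrow> nat \<Rightarrow> 'a \<Rightarrow> 's \<Rightarrow> 'mv list \<Rightarrow> 'x"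
    and bid :: "'l \<Rightarrow> nat \<Rightarrow> nat \<Rightarrow> 'a \<Rightarrow> 's \<Rightarrow> 'mv list \<Rightarrow> 'mb"
    and ver :: "'l \<Rightarrow> nat \<Rightarrow> nat \<Rightarrow> 't \<Rightarrow> 'mb list \<Rightarrow> 'y list \<Rightarrow> 'mv"
  shows "\<exists>\<alpha> \<gamma>. \<forall>g1 g3.
           (\<integral>\<^sup>+w. g1 (fst w) * indicator {m} (fst (snd w)) * g3 (snd (snd w))
              \<partial>map_pmf (\<lambda>(a, s, t, ys).
                       case bidder_trace enc bid ver r l (a l) (s l) (t l) ys n of (xs, hb, hv) \<Rightarrow>
                         ((a l, s l), ((hb, hv), xs), (ys, t l)))
                (protocol_dist W PA PS PT enc bid ver r n))
           = \<alpha> g1 * \<gamma> g3"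
proof -
  obtain xs hb hv where m: "m = ((hb, hv), xs)"
    by (metis prod.exhaust)
  let ?T = "\<lambda>x x' t ys. bidder_trace enc bid ver r l x x' t ys n"
  let ?PiA = "Pi_pmf UNIV undefined PA" and ?PiS = "Pi_pmf UNIV undefined PS"
    and ?PiT = "Pi_pmf UNIV undefined PT"
  define B :: "'a \<Rightarrow> 's \<Rightarrow> ennreal" where "B x x' = of_bool (\<exists>t ys. ?T x x' t ys = (xs, hb, hv))" for x x'
  define K :: "('y list \<times> 't \<Rightarrow> ennreal) \<Rightarrow> ('l \<Rightarrow> 'a) \<Rightarrow> ('l \<Rightarrow> 's) \<Rightarrow> ('l \<Rightarrow> 't) \<Rightarrow> ennreal"
    where "K g3 a s t = (\<integral>\<^sup>+ys. of_bool (\<exists>x x'. ?T x x' (t l) ys = (xs, hb, hv)) * g3 (ys, t l)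
                          \<partial>channel_outputs W (replay_inputs l xs enc) bid ver r a s t n)" for g3 a s t
  have K_upd: "K g3 (a(l := x)) (s(l := x')) t = K g3 a s t" for g3 a s t x x'
    by (simp add: K_def channel_outputs_replay_upd)
  have view: "g1 (fst w) * indicator {m} (fst (snd w)) * g3 (snd (snd w))
      = g1 (a l, s l) * (indicator {(xs, hb, hv)} (?T (a l) (s l) (t l) ys) * g3 (ys, t l))"
    if "w = (case ?T (a l) (s l) (t l) ys of (xs, hb, hv) \<Rightarrow> ((a l, s l), ((hb, hv), xs), (ys, t l)))"
    for w a s t ys and g1 :: "'a \<times> 's \<Rightarrow> ennreal" and g3 :: "'y list \<times> 't \<Rightarrow> ennreal"
    using that unfolding m by (cases "?T (a l) (s l) (t l) ys") (auto split: split_indicator)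
  have inner: "(\<integral>\<^sup>+ys. g1 (a l, s l) * (indicator {(xs, hb, hv)} (?T (a l) (s l) (t l) ys) * g3 (ys, t l))
                 \<partial>channel_outputs W enc bid ver r a s t n)
      = g1 (a l, s l) * B (a l) (s l) * K g3 a s t" for a s t and g1 :: "'a \<times> 's \<Rightarrow> ennreal" and g3
    by (simp add: nn_integral_cmult B_def K_def mult.assoc
        nn_integral_channel_outputs_transcript[where a = a and s = s and t = t])
  have factor: "(\<integral>\<^sup>+w. g1 (fst w) * indicator {m} (fst (snd w)) * g3 (snd (snd w))
          \<partial>map_pmf (\<lambda>(a, s, t, ys).
                   case ?T (a l) (s l) (t l) ys of (xs, hb, hv) \<Rightarrow> ((a l, s l), ((hb, hv), xs), (ys, t l)))
            (protocol_dist W PA PS PT enc bid ver r n))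
      = (\<integral>\<^sup>+x. \<integral>\<^sup>+x'. g1 (x, x') * B x x' \<partial>PS l \<partial>PA l)
        * (\<integral>\<^sup>+a. \<integral>\<^sup>+s. \<integral>\<^sup>+t. K g3 a s t \<partial>?PiT \<partial>?PiS \<partial>?PiA)" (is "?L = ?R") for g1 g3
  proof -
    have "?L = (\<integral>\<^sup>+a. \<integral>\<^sup>+s. g1 (a l, s l) * B (a l) (s l) * (\<integral>\<^sup>+t. K g3 a s t \<partial>?PiT) \<partial>?PiS \<partial>?PiA)"
      by (simp add: protocol_dist_def view inner nn_integral_cmult)
    also have "\<dots> = ?R"
      by (rule nn_integral_Pi_pmf_factor2[where h = "\<lambda>x x'. g1 (x, x') * B x x'"
            and \<phi> = "\<lambda>a s. \<integral>\<^sup>+t. K g3 a s t \<partial>?PiT"]) (simp add: K_upd)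
    finally show ?thesis .
  qed
  show ?thesis
    by (intro exI allI) (rule factor)
qed

theorem lemma5:
  fixes W :: "('l::finite \<Rightarrow> 'x::finite) \<Rightarrow> 'y::finite pmf"
    and PA :: "'l \<Rightarrow> 'a pmf" and PS :: "'l \<Rightarrow> 's pmf" and PT :: "'l \<Rightarrow> 't pmf"
    and enc :: "'l \<Rightarrow> nat \<Rightarrow> 'a \<Rightarrow> 's \<Rightarrow> 'mv list \<Rightarrow> 'x"
    and bid :: "'l \<Rightarrow> nat \<Rightarrow> nat \<Rightarrow> 'a \<Rightarrow> 's \<Rightarrow> 'mv list \<Rightarrow> 'mb"
    and ver :: "'l \<Rightarrow> nat \<Rightarrow> nat \<Rightarrow> 't \<Rightarrow> 'mb list \<Rightarrow> 'y list \<Rightarrow> 'mv"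
    and r :: "nat \<Rightarrow> nat" and n :: nat and l :: 'l
  shows "markov_chain
           (map_pmf (\<lambda>(a, s, t, ys).
                       case bidder_trace enc bid ver r l (a l) (s l) (t l) ys n of (xs, hb, hv) \<Rightarrow>
                         ((a l, s l), ((hb, hv), xs), (ys, t l)))
              (protocol_dist W PA PS PT enc bid ver r n))"
  by (rule markov_chain_if_factorizes) (rule bidder_view_factorizes)

end
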